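(* Let $S$ and $T$ be linear relations between two vector spaces $\mathcal{H}$ and $\mathcal{K}$. The following three statements are equivalent: (i) $S=T$; (ii) $\ker S=\ker T$ and $\operatorname{ran} S+\operatorname{ran} T\subseteq \operatorname{ran}(S\cap T)$; (iii) $\operatorname{ran} S=\operatorname{ran} T$ and $\ker(S\vee T)\subseteq \ker(S\cap T)$.
   Context: A linear relation between $\mathcal{H}$ and $\mathcal{K}$ is a linear subspace of $\mathcal{H}\times\mathcal{K}$. For such $R$: $\operatorname{ran} R=\{k:(h,k)\in R \text{ for some } h\}$, $\ker R=\{h:(h,0)\in R\}$. $S\cap T$ is the intersection of the subspaces $S,T$, and $S\vee T$ is the linear span of $S\cup T$. *)

theory Defs
  imports Complex_Main "HOL-Library.Product_Plus"
begin

definition prod_scale :: "('f \<Rightarrow> 'h \<Rightarrow> 'h) \<Rightarrow> ('f \<Rightarrow> 'k \<Rightarrow> 'k) \<Rightarrow> 'f \<Rightarrow> 'h \<times> 'k \<Rightarrow> 'h \<times> 'k"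
  where "prod_scale sH sK c p = (sH c (fst p), sK c (snd p))"

definition linear_relation ::
  "('f::field \<Rightarrow> 'h::ab_group_add \<Rightarrow> 'h) \<Rightarrow> ('f \<Rightarrow> 'k::ab_group_add \<Rightarrow> 'k) \<Rightarrow> ('h \<times> 'k) set \<Rightarrow> bool"
  where "linear_relation sH sK R \<longleftrightarrow> module.subspace (prod_scale sH sK) R"

definition lr_ran :: "('h \<times> 'k) set \<Rightarrow> 'k set"
  where "lr_ran R = {k. \<exists>h. (h, k) \<in> R}"

definition lr_ker :: "('h \<times> 'k::zero) set \<Rightarrow> 'h set"
  where "lr_ker R = {h. (h, 0) \<in> R}"

definition lr_join ::
  "('f::field \<Rightarrow> 'h::ab_group_add \<Rightarrow> 'h) \<Rightarrow> ('f \<Rightarrow> 'k::ab_group_add \<Rightarrow> 'k) \<Rightarrow> ('h \<times> 'k) set \<Rightarrow> ('h \<times> 'k) set \<Rightarrow> ('h \<times> 'k) set"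
  where "lr_join sH sK S T = module.span (prod_scale sH sK) (S \<union> T)"

definition set_sum :: "'a::plus set \<Rightarrow> 'a set \<Rightarrow> 'a set"
  where "set_sum A B = {a + b | a b. a \<in> A \<and> b \<in> B}"

end

theory Submission
  imports Defs
begin

text \<open>Both converse implications rest on the decomposition (h, k) = (h - h', 0) + (h', k):
  a pair of S lies in T as soon as T contains a pair (h', k) with the same second component
  and h - h' lies in the kernel of T. Under (ii) such an h' comes from
  ran S \<subseteq> ran S + ran T \<subseteq> ran (S \<inter> T), and h - h' \<in> ker S = ker T; under (iii)
  it comes from ran S = ran T, and h - h' \<in> ker (S \<or> T) \<subseteq> ker T.\<close>

lemma module_prod_scale:
  assumes "module sH" and "module sK"
  shows "module (prod_scale sH sK)"
proof -
  interpret H: module sH by fact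
  interpret K: module sK by fact
  show ?thesis
    by unfold_locales
      (auto simp: prod_scale_def H.scale_right_distrib K.scale_right_distrib
         H.scale_left_distrib K.scale_left_distrib)
qed

lemma set_sum_ge_left: "0 \<in> B \<Longrightarrow> A \<subseteq> set_sum A (B :: 'a::monoid_add set)"
  unfolding set_sum_def by force

lemma set_sum_ge_right: "0 \<in> A \<Longrightarrow> B \<subseteq> set_sum (A :: 'a::monoid_add set) B"
  unfolding set_sum_def by force

context
  fixes s :: "'a::comm_ring_1 \<Rightarrow> 'h::ab_group_add \<times> 'k::ab_group_add \<Rightarrow> 'h \<times> 'k"
  assumes module: "module s"
begin

interpretation module s by (rule module)

lemma zero_in_lr_ran: "subspace S \<Longrightarrow> 0 \<in> lr_ran S"
  using subspace_0 by (force simp: lr_ran_def zero_prod_def)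

lemma set_sum_lr_ran_self: "subspace S \<Longrightarrow> set_sum (lr_ran S) (lr_ran S) \<subseteq> lr_ran S"
  unfolding set_sum_def lr_ran_def by (force dest: subspace_add)

lemma mem_subspace_if_ker_shift:
  assumes "subspace T" and "(h', k) \<in> T" and "h - h' \<in> lr_ker T"
  shows "(h, k) \<in> T"
proof -
  have "(h - h', 0) + (h', k) \<in> T"
    using assms by (intro subspace_add) (simp_all add: lr_ker_def)
  then show ?thesis by simp
qed

lemma subset_if_ker_subset_ran_subset_Int:
  assumes S: "subspace S" and T: "subspace T"
    and ker: "lr_ker S \<subseteq> lr_ker T" and ran: "lr_ran S \<subseteq> lr_ran (S \<inter> T)"
  shows "S \<subseteq> T"
proof clarify
  fix h k assume hk: "(h, k) \<in> S"
  then obtain h' where h': "(h', k) \<in> S" "(h', k) \<in> T"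
    using ran by (auto simp: lr_ran_def)
  have "(h, k) - (h', k) \<in> S"
    using S hk h'(1) by (rule subspace_diff)
  then have "h - h' \<in> lr_ker T"
    using ker by (auto simp: lr_ker_def)
  with T h'(2) show "(h, k) \<in> T"
    by (rule mem_subspace_if_ker_shift)
qed

lemma subset_if_ran_subset_ker_span_subset:
  assumes T: "subspace T"
    and ran: "lr_ran S \<subseteq> lr_ran T" and ker: "lr_ker (span (S \<union> T)) \<subseteq> lr_ker T"
  shows "S \<subseteq> T"
proof clarify
  fix h k assume hk: "(h, k) \<in> S"
  then obtain h' where h': "(h', k) \<in> T"
    using ran by (auto simp: lr_ran_def)
  have "(h, k) - (h', k) \<in> span (S \<union> T)"
    using hk h' by (intro span_diff span_base) auto
  then have "h - h' \<in> lr_ker T"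
    using ker by (auto simp: lr_ker_def)
  with T h' show "(h, k) \<in> T"
    by (rule mem_subspace_if_ker_shift)
qed

lemma lr_eq_iff_ker_eq_ran_sum_subset:
  assumes S: "subspace S" and T: "subspace T"
  shows "S = T \<longleftrightarrow>
    lr_ker S = lr_ker T \<and> set_sum (lr_ran S) (lr_ran T) \<subseteq> lr_ran (S \<inter> T)"
proof
  assume "S = T"
  then show "lr_ker S = lr_ker T \<and> set_sum (lr_ran S) (lr_ran T) \<subseteq> lr_ran (S \<inter> T)"
    using set_sum_lr_ran_self[OF S] by simp
next
  assume ker_ran: "lr_ker S = lr_ker T \<and> set_sum (lr_ran S) (lr_ran T) \<subseteq> lr_ran (S \<inter> T)"
  then have "lr_ran S \<subseteq> lr_ran (S \<inter> T)" "lr_ran T \<subseteq> lr_ran (T \<inter> S)"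
    using set_sum_ge_left[OF zero_in_lr_ran[OF T], of "lr_ran S"]
      set_sum_ge_right[OF zero_in_lr_ran[OF S], of "lr_ran T"]
    by (auto simp only: Int_commute)
  with ker_ran show "S = T"
    using subset_if_ker_subset_ran_subset_Int S T by (metis subset_antisym order_refl)
qed

lemma lr_eq_iff_ran_eq_ker_span_subset:
  assumes S: "subspace S" and T: "subspace T"
  shows "S = T \<longleftrightarrow> lr_ran S = lr_ran T \<and> lr_ker (span (S \<union> T)) \<subseteq> lr_ker (S \<inter> T)"
proof
  assume "S = T"
  then show "lr_ran S = lr_ran T \<and> lr_ker (span (S \<union> T)) \<subseteq> lr_ker (S \<inter> T)"
    by (simp add: span_eq_iff[THEN iffD2, OF T])
next
  assume ran_ker: "lr_ran S = lr_ran T \<and> lr_ker (span (S \<union> T)) \<subseteq> lr_ker (S \<inter> T)"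
  then have "lr_ker (span (S \<union> T)) \<subseteq> lr_ker T" "lr_ker (span (T \<union> S)) \<subseteq> lr_ker S"
    by (auto simp: lr_ker_def Un_commute)
  with ran_ker show "S = T"
    using subset_if_ran_subset_ker_span_subset S T by (metis subset_antisym order_refl)
qed

end

theorem corollary3p2:
  fixes sH :: "'f::field \<Rightarrow> 'h::ab_group_add \<Rightarrow> 'h"
    and sK :: "'f \<Rightarrow> 'k::ab_group_add \<Rightarrow> 'k"
    and S T :: "('h \<times> 'k) set"
  assumes "vector_space sH" and "vector_space sK"
    and "linear_relation sH sK S" and "linear_relation sH sK T"
  shows "(S = T \<longleftrightarrow>
           lr_ker S = lr_ker T \<and> set_sum (lr_ran S) (lr_ran T) \<subseteq> lr_ran (S \<inter> T))
       \<and> (S = T \<longleftrightarrow>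
           lr_ran S = lr_ran T \<and> lr_ker (lr_join sH sK S T) \<subseteq> lr_ker (S \<inter> T))"
proof -
  have m: "module (prod_scale sH sK)"
    using assms(1,2) by (intro module_prod_scale) (simp_all add: module_iff_vector_space)
  have S: "module.subspace (prod_scale sH sK) S" and T: "module.subspace (prod_scale sH sK) T"
    using assms(3,4) by (simp_all add: linear_relation_def)
  show ?thesis
    unfolding lr_join_def
    using lr_eq_iff_ker_eq_ran_sum_subset[OF m S T] lr_eq_iff_ran_eq_ker_span_subset[OF m S T]
    by blast
qed

end
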